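(* For $n\ge2$, within the set of CPS tensors in $\mathbb{C}^{n\times n\times n\times n}$: $\mathbb{C}\vec S^{n^2\times n^2}_+$ is a proper subset of $CPS^{n^4}_+$ and a proper subset of $HPSD^{4,n}_+$; furthermore $CPS^{n^4}_+\not\subset HPSD^{4,n}_+$ and $HPSD^{4,n}_+\not\subset CPS^{n^4}_+$.
   Context: A tensor $\mathcal{A}\in\mathbb{C}^{n\times n\times n\times n}$ is conjugate partial-symmetric (CPS) if $\mathcal{A}_{ijkl}=\overline{\mathcal{A}_{klij}}$ and $\mathcal{A}_{ijkl}=\mathcal{A}_{jikl}=\mathcal{A}_{ijlk}$ for all indices. Write $\langle X,\mathcal{A}X\rangle=\sum_{i,j,k,l}\mathcal{A}_{ijkl}X_{kl}\overline{X_{ij}}$. For a CPS $\mathcal{A}$: $\mathcal{A}\in CPS^{n^4}_+$ (PSD) iff $\sum_{ijkl}\mathcal{A}_{ijkl}x_ix_j\bar x_k\bar x_l\ge0$ for all $x\in\mathbb{C}^n$; $\mathcal{A}\in\mathbb{C}\vec S^{n^2\times n^2}_+$ (matrix PSD) iff $\langle X,\mathcal{A}X\rangle\ge0$ for all complex symmetric $X\in\mathbb{C}^{n\times n}$ ($X=X^T$); $\mathcal{A}\in HPSD^{4,n}_+$ (general PSD) iff $\langle X,\mathcal{A}X\rangle\ge0$ for all Hermitian positive semidefinite $X\in\mathbb{C}^{n\times n}$. *)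

theory Defs
  imports Complex_Main
begin

text \<open>A fourth-order tensor in C^(n x n x n x n), indexed by a finite type 'n with CARD('n) = n.\<close>
type_synonym 'n tensor4 = "'n \<Rightarrow> 'n \<Rightarrow> 'n \<Rightarrow> 'n \<Rightarrow> complex"
type_synonym 'n cmat = "'n \<Rightarrow> 'n \<Rightarrow> complex"

definition is_CPS :: "('n::finite) tensor4 \<Rightarrow> bool" where
  "is_CPS A \<longleftrightarrow> (\<forall>i j k l. A i j k l = cnj (A k l i j) \<and> A i j k l = A j i k l \<and> A i j k l = A i j l k)"

definition nonneg_real :: "complex \<Rightarrow> bool" where
  "nonneg_real z \<longleftrightarrow> Im z = 0 \<and> Re z \<ge> 0"

definition tensor_form :: "('n::finite) tensor4 \<Rightarrow> ('n \<Rightarrow> complex) \<Rightarrow> complex" where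
  "tensor_form A x = (\<Sum>i\<in>UNIV. \<Sum>j\<in>UNIV. \<Sum>k\<in>UNIV. \<Sum>l\<in>UNIV.
      A i j k l * x i * x j * cnj (x k) * cnj (x l))"

definition mat_form :: "('n::finite) tensor4 \<Rightarrow> 'n cmat \<Rightarrow> complex" where
  "mat_form A X = (\<Sum>i\<in>UNIV. \<Sum>j\<in>UNIV. \<Sum>k\<in>UNIV. \<Sum>l\<in>UNIV.
      A i j k l * X k l * cnj (X i j))"

definition complex_symmetric :: "('n::finite) cmat \<Rightarrow> bool" where
  "complex_symmetric X \<longleftrightarrow> (\<forall>i j. X i j = X j i)"

definition hermitian_psd :: "('n::finite) cmat \<Rightarrow> bool" where
  "hermitian_psd X \<longleftrightarrow> (\<forall>i j. X i j = cnj (X j i)) \<and>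
     (\<forall>v :: 'n \<Rightarrow> complex. nonneg_real (\<Sum>i\<in>UNIV. \<Sum>j\<in>UNIV. cnj (v i) * X i j * v j))"

definition CPS_psd :: "('n::finite) tensor4 set" where
  "CPS_psd = {A. is_CPS A \<and> (\<forall>x. nonneg_real (tensor_form A x))}"

definition CPS_matrix_psd :: "('n::finite) tensor4 set" where
  "CPS_matrix_psd = {A. is_CPS A \<and> (\<forall>X. complex_symmetric X \<longrightarrow> nonneg_real (mat_form A X))}"

definition CPS_HPSD :: "('n::finite) tensor4 set" where
  "CPS_HPSD = {A. is_CPS A \<and> (\<forall>X. hermitian_psd X \<longrightarrow> nonneg_real (mat_form A X))}"

end

theory Submission
  imports Defs "HOL-Library.Function_Algebras"
begin

(* Taking X = conj(x) conj(x)^T shows that matrix-PSD implies PSD; since the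
   partial symmetries of a CPS tensor make X and its symmetric part (X + X^T)/2 give the same
   value of the form, matrix-PSD also implies general PSD. For distinct indices a, b the
   tensor P = e_aabb + e_bbaa has tensor form 2 Re(x_a^2 conj(x_b)^2), negative at
   x = e_a + i e_b, while its matrix form on a Hermitian PSD X is 2 X_aa X_bb >= 0. The tensor
   M - P, with M the symmetrization of e_abab, has tensor form 4|w|^2 - 2 Re(w^2) >= 0 for
   w = x_a conj(x_b), but is negative on the rank-one Hermitian matrix v v^* with
   v = e_a + i e_b. Neither tensor is matrix-PSD, so both inclusions are proper. *)

definition basis_tensor :: "'n \<Rightarrow> 'n \<Rightarrow> 'n \<Rightarrow> 'n \<Rightarrow> ('n::finite) tensor4" where
  "basis_tensor p q r s = (\<lambda>i j k l. if i = p \<and> j = q \<and> k = r \<and> l = s then 1 else 0)"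

lemma cnj_basis_tensor: "cnj (basis_tensor p q r s i j k l) = basis_tensor p q r s i j k l"
  by (simp add: basis_tensor_def)

lemma basis_tensor_swap_pairs: "basis_tensor p q r s k l i j = basis_tensor r s p q i j k l"
  by (auto simp: basis_tensor_def)

lemma basis_tensor_swap_fst: "basis_tensor p q r s j i k l = basis_tensor q p r s i j k l"
  by (auto simp: basis_tensor_def)

lemma basis_tensor_swap_snd: "basis_tensor p q r s i j l k = basis_tensor p q s r i j k l"
  by (auto simp: basis_tensor_def)

lemma sum4_delta:
  fixes g :: "'n::finite \<Rightarrow> 'n \<Rightarrow> 'n \<Rightarrow> 'n \<Rightarrow> complex"
  shows "(\<Sum>i\<in>UNIV. \<Sum>j\<in>UNIV. \<Sum>k\<in>UNIV. \<Sum>l\<in>UNIV.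
           (if i = p \<and> j = q \<and> k = r \<and> l = s then 1 else 0) * g i j k l) = g p q r s"
proof -
  have "\<And>i j k l. (if i = p \<and> j = q \<and> k = r \<and> l = s then 1 else 0) * g i j k l =
    (if l = s then if k = r then if j = q then if i = p then g i j k l else 0 else 0 else 0 else 0)"
    by auto
  then show ?thesis by (simp add: sum.delta)
qed

lemma mat_form_basis_tensor: "mat_form (basis_tensor p q r s) X = X r s * cnj (X p q)"
  unfolding mat_form_def basis_tensor_def by (simp only: mult.assoc sum4_delta)

lemma tensor_form_basis_tensor:
  "tensor_form (basis_tensor p q r s) x = x p * x q * cnj (x r) * cnj (x s)"
  unfolding tensor_form_def basis_tensor_def by (simp only: mult.assoc sum4_delta)

lemma mat_form_add: "mat_form (A + B) X = mat_form A X + mat_form B X"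
  unfolding mat_form_def by (simp add: distrib_right sum.distrib)

lemma mat_form_diff: "mat_form (A - B) X = mat_form A X - mat_form B X"
  unfolding mat_form_def by (simp add: left_diff_distrib sum_subtractf)

lemma tensor_form_add: "tensor_form (A + B) x = tensor_form A x + tensor_form B x"
  unfolding tensor_form_def by (simp add: distrib_right sum.distrib)

lemma tensor_form_diff: "tensor_form (A - B) x = tensor_form A x - tensor_form B x"
  unfolding tensor_form_def by (simp add: left_diff_distrib sum_subtractf)

lemma is_CPS_diff:
  assumes "is_CPS A" "is_CPS B" shows "is_CPS (A - B)"
  unfolding is_CPS_def minus_apply
proof (intro allI conjI)
  fix i j k l
  have a: "A i j k l = cnj (A k l i j)" "A i j k l = A j i k l" "A i j k l = A i j l k"
   and b: "B i j k l = cnj (B k l i j)" "B i j k l = B j i k l" "B i j k l = B i j l k"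
    using assms unfolding is_CPS_def by blast+
  show "A i j k l - B i j k l = cnj (A k l i j - B k l i j)" using a(1) b(1) by simp
  show "A i j k l - B i j k l = A j i k l - B j i k l" using a(2) b(2) by simp
  show "A i j k l - B i j k l = A i j l k - B i j l k" using a(3) b(3) by simp
qed

lemma tensor_form_eq_mat_form:
  "tensor_form A x = mat_form A (\<lambda>k l. cnj (x k) * cnj (x l))"
  unfolding mat_form_def tensor_form_def by (simp add: mult_ac)

lemma CPS_matrix_psd_subset_CPS_psd: "CPS_matrix_psd \<subseteq> CPS_psd"
proof
  fix A :: "'n::finite tensor4" assume A: "A \<in> CPS_matrix_psd"
  have "nonneg_real (tensor_form A x)" for x
  proof -
    have "complex_symmetric (\<lambda>k l. cnj (x k) * cnj (x l))"
      by (simp add: complex_symmetric_def mult.commute)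
    then show ?thesis using A by (simp add: CPS_matrix_psd_def tensor_form_eq_mat_form)
  qed
  then show "A \<in> CPS_psd" using A by (simp add: CPS_matrix_psd_def CPS_psd_def)
qed

definition tensor_apply :: "('n::finite) tensor4 \<Rightarrow> 'n cmat \<Rightarrow> 'n cmat" where
  "tensor_apply A X i j = (\<Sum>k\<in>UNIV. \<Sum>l\<in>UNIV. A i j k l * X k l)"

lemma mat_form_eq_tensor_apply:
  "mat_form A X = (\<Sum>i\<in>UNIV. \<Sum>j\<in>UNIV. tensor_apply A X i j * cnj (X i j))"
  unfolding mat_form_def tensor_apply_def by (simp add: sum_distrib_right)

lemma tensor_apply_transpose:
  assumes "is_CPS A" shows "tensor_apply A (\<lambda>k l. X l k) = tensor_apply A X"
proof (intro ext)
  fix i j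
  have "tensor_apply A (\<lambda>k l. X l k) i j = (\<Sum>l\<in>UNIV. \<Sum>k\<in>UNIV. A i j k l * X l k)"
    unfolding tensor_apply_def by (rule sum.swap)
  also have "\<dots> = tensor_apply A X i j"
  proof -
    have "A i j k l = A i j l k" for k l using assms unfolding is_CPS_def by metis
    then show ?thesis unfolding tensor_apply_def by simp
  qed
  finally show "tensor_apply A (\<lambda>k l. X l k) i j = tensor_apply A X i j" .
qed

lemma tensor_apply_symmetric:
  assumes "is_CPS A" shows "tensor_apply A X j i = tensor_apply A X i j"
proof -
  have "A j i k l = A i j k l" for k l using assms unfolding is_CPS_def by metis
  then show ?thesis unfolding tensor_apply_def by simp
qed

lemma tensor_apply_midpoint:
  "tensor_apply A (\<lambda>k l. (X k l + Y k l) / 2) i j = (tensor_apply A X i j + tensor_apply A Y i j) / 2"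
  unfolding tensor_apply_def
  by (simp add: distrib_left sum.distrib sum_divide_distrib add_divide_distrib)

lemma mat_form_symmetric_part:
  assumes "is_CPS A"
  shows "mat_form A (\<lambda>k l. (X k l + X l k) / 2) = mat_form A X"
proof -
  let ?AX = "tensor_apply A X"
  have AS: "tensor_apply A (\<lambda>k l. (X k l + X l k) / 2) i j = ?AX i j" for i j
    using tensor_apply_midpoint[of A X "\<lambda>k l. X l k" i j] tensor_apply_transpose[OF assms, of X]
    by simp
  have "(\<Sum>i\<in>UNIV. \<Sum>j\<in>UNIV. ?AX i j * cnj (X j i)) = (\<Sum>j\<in>UNIV. \<Sum>i\<in>UNIV. ?AX i j * cnj (X j i))"
    by (rule sum.swap)
  also have "\<dots> = mat_form A X"
    by (simp add: mat_form_eq_tensor_apply tensor_apply_symmetric[OF assms])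
  finally have transposed: "(\<Sum>i\<in>UNIV. \<Sum>j\<in>UNIV. ?AX i j * cnj (X j i)) = mat_form A X" .
  have "mat_form A (\<lambda>k l. (X k l + X l k) / 2)
      = (\<Sum>i\<in>UNIV. \<Sum>j\<in>UNIV. ?AX i j * cnj ((X i j + X j i) / 2))"
    by (simp only: mat_form_eq_tensor_apply AS)
  also have "\<dots> = (mat_form A X + (\<Sum>i\<in>UNIV. \<Sum>j\<in>UNIV. ?AX i j * cnj (X j i))) / 2"
    by (simp add: mat_form_eq_tensor_apply distrib_left sum.distrib sum_divide_distrib
        add_divide_distrib)
  finally show ?thesis by (simp add: transposed)
qed

lemma CPS_matrix_psd_subset_CPS_HPSD: "CPS_matrix_psd \<subseteq> CPS_HPSD"
proof
  fix A :: "'n::finite tensor4" assume A: "A \<in> CPS_matrix_psd"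
  then have CPS: "is_CPS A" by (simp add: CPS_matrix_psd_def)
  have "nonneg_real (mat_form A X)" for X
  proof -
    have "complex_symmetric (\<lambda>k l. (X k l + X l k) / 2)"
      by (simp add: complex_symmetric_def add.commute)
    then have "nonneg_real (mat_form A (\<lambda>k l. (X k l + X l k) / 2))"
      using A by (simp add: CPS_matrix_psd_def)
    then show ?thesis by (simp only: mat_form_symmetric_part[OF CPS])
  qed
  then show "A \<in> CPS_HPSD" using CPS by (simp add: CPS_HPSD_def)
qed

lemma nonneg_real_mult_cnj: "nonneg_real (z * cnj z)"
  by (simp add: nonneg_real_def)

lemma hermitian_psd_outer: "hermitian_psd (\<lambda>i j. v i * cnj (v j))"
proof -
  have "(\<Sum>i\<in>UNIV. \<Sum>j\<in>UNIV. cnj (w i) * (v i * cnj (v j)) * w j)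
      = (\<Sum>i\<in>UNIV. cnj (w i) * v i) * cnj (\<Sum>i\<in>UNIV. cnj (w i) * v i)" for w
    by (simp add: sum_product mult_ac)
  then have "nonneg_real (\<Sum>i\<in>UNIV. \<Sum>j\<in>UNIV. cnj (w i) * (v i * cnj (v j)) * w j)" for w
    by (simp only: nonneg_real_mult_cnj)
  then show ?thesis unfolding hermitian_psd_def by (intro conjI allI) simp_all
qed

lemma hermitian_psd_diag:
  assumes "hermitian_psd X" shows "nonneg_real (X a a)"
proof -
  let ?e = "\<lambda>i. if i = a then (1::complex) else 0"
  have "nonneg_real (\<Sum>i\<in>UNIV. \<Sum>j\<in>UNIV. cnj (?e i) * X i j * ?e j)"
    using assms unfolding hermitian_psd_def by (rule conjunct2[THEN spec])
  moreover have "cnj (?e i) * X i j * ?e j = (if j = a then if i = a then X i j else 0 else 0)"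
    for i j by simp
  ultimately show ?thesis by (simp add: sum.delta)
qed

definition pair_tensor :: "'n \<Rightarrow> 'n \<Rightarrow> ('n::finite) tensor4" where
  "pair_tensor a b = basis_tensor a a b b + basis_tensor b b a a"

definition mixed_tensor :: "'n \<Rightarrow> 'n \<Rightarrow> ('n::finite) tensor4" where
  "mixed_tensor a b = basis_tensor a b a b + basis_tensor a b b a
     + basis_tensor b a a b + basis_tensor b a b a"

lemma is_CPS_pair_tensor: "is_CPS (pair_tensor a b)"
  unfolding is_CPS_def pair_tensor_def
  by (simp add: cnj_basis_tensor basis_tensor_swap_pairs basis_tensor_swap_fst
      basis_tensor_swap_snd add_ac)

lemma is_CPS_mixed_tensor: "is_CPS (mixed_tensor a b)"
  unfolding is_CPS_def mixed_tensor_def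
  by (simp add: cnj_basis_tensor basis_tensor_swap_pairs basis_tensor_swap_fst
      basis_tensor_swap_snd add_ac)

definition e_plus_i_e :: "'n \<Rightarrow> 'n \<Rightarrow> 'n \<Rightarrow> complex" where
  "e_plus_i_e a b = (\<lambda>i. if i = a then 1 else if i = b then \<i> else 0)"

lemma pair_tensor_in_CPS_HPSD: "pair_tensor a b \<in> CPS_HPSD"
proof -
  have "nonneg_real (mat_form (pair_tensor a b) X)" if X: "hermitian_psd X" for X
  proof -
    have "mat_form (pair_tensor a b) X = X b b * cnj (X a a) + X a a * cnj (X b b)"
      unfolding pair_tensor_def by (simp add: mat_form_add mat_form_basis_tensor)
    then show ?thesis
      using hermitian_psd_diag[OF X, of a] hermitian_psd_diag[OF X, of b]
      by (simp add: nonneg_real_def)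
  qed
  then show ?thesis using is_CPS_pair_tensor by (simp add: CPS_HPSD_def)
qed

lemma pair_tensor_notin_CPS_psd:
  assumes "a \<noteq> b" shows "pair_tensor a b \<notin> CPS_psd"
proof -
  have "tensor_form (pair_tensor a b) (e_plus_i_e a b) = -2"
    using assms unfolding pair_tensor_def
    by (simp add: tensor_form_add tensor_form_basis_tensor e_plus_i_e_def)
  then have "\<not> nonneg_real (tensor_form (pair_tensor a b) (e_plus_i_e a b))"
    by (simp add: nonneg_real_def)
  then show ?thesis by (auto simp: CPS_psd_def)
qed

lemma mixed_minus_pair_in_CPS_psd: "mixed_tensor a b - pair_tensor a b \<in> CPS_psd"
proof -
  have "nonneg_real (tensor_form (mixed_tensor a b - pair_tensor a b) x)" for x
  proof -
    define w where "w = x a * cnj (x b)"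
    have "tensor_form (mixed_tensor a b - pair_tensor a b) x = 4 * w * cnj w - w\<^sup>2 - (cnj w)\<^sup>2"
      unfolding mixed_tensor_def pair_tensor_def w_def
      by (simp add: tensor_form_add tensor_form_diff tensor_form_basis_tensor power2_eq_square
          mult_ac)
    moreover have "nonneg_real (4 * w * cnj w - w\<^sup>2 - (cnj w)\<^sup>2)"
      by (simp add: nonneg_real_def power2_eq_square algebra_simps)
    ultimately show ?thesis by simp
  qed
  then show ?thesis
    using is_CPS_diff[OF is_CPS_mixed_tensor is_CPS_pair_tensor] by (simp add: CPS_psd_def)
qed

lemma mixed_minus_pair_notin_CPS_HPSD:
  assumes "a \<noteq> b" shows "mixed_tensor a b - pair_tensor a b \<notin> CPS_HPSD"
proof -
  let ?v = "e_plus_i_e a b"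
  have "mat_form (mixed_tensor a b - pair_tensor a b) (\<lambda>i j. ?v i * cnj (?v j)) = -2"
    using assms unfolding mixed_tensor_def pair_tensor_def
    by (simp add: mat_form_add mat_form_diff mat_form_basis_tensor e_plus_i_e_def)
  then have "\<not> nonneg_real (mat_form (mixed_tensor a b - pair_tensor a b) (\<lambda>i j. ?v i * cnj (?v j)))"
    by (simp add: nonneg_real_def)
  then show ?thesis using hermitian_psd_outer[of ?v] by (auto simp: CPS_HPSD_def)
qed

theorem mainTheorem20:
  assumes "card (UNIV :: ('n::finite) set) \<ge> 2"
  shows "(CPS_matrix_psd :: 'n tensor4 set) \<subset> CPS_psd
       \<and> (CPS_matrix_psd :: 'n tensor4 set) \<subset> CPS_HPSD
       \<and> \<not> ((CPS_psd :: 'n tensor4 set) \<subseteq> CPS_HPSD)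
       \<and> \<not> ((CPS_HPSD :: 'n tensor4 set) \<subseteq> CPS_psd)"
proof -
  obtain a b :: 'n where ab: "a \<noteq> b"
    using assms by (metis card_le_Suc0_iff_eq finite_UNIV not_less_eq_eq numeral_2_eq_2)
  let ?P = "pair_tensor a b" and ?Q = "mixed_tensor a b - pair_tensor a b"
  have "?P \<in> CPS_HPSD - CPS_psd"
    using pair_tensor_in_CPS_HPSD pair_tensor_notin_CPS_psd[OF ab] by blast
  moreover have "?Q \<in> CPS_psd - CPS_HPSD"
    using mixed_minus_pair_in_CPS_psd mixed_minus_pair_notin_CPS_HPSD[OF ab] by blast
  ultimately show ?thesis
    using CPS_matrix_psd_subset_CPS_psd CPS_matrix_psd_subset_CPS_HPSD by blast
qed

end
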